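(* For $G_w$-almost every $w\in\Theta_w$, the distribution $K_w$ has a continuous CDF (is atomless). Consequently the set $\Theta':=\{(w,B)\in\Theta: K_w \text{ has a continuous CDF}\}$ satisfies $G(\Theta')=1$.
   Context: Setting. Fix an integer $d\ge 2$ and constants $U>0$, $B_{\min}>0$. Buyer types are $(w,B)\in\Theta:=(0,U)^d\times(B_{\min},U)$; $\Theta_w:=(0,U)^d$. Item types are $\alpha\in A\subset\mathbb{R}^d_{+}$ (strictly positive orthant); all sets carry the Lebesgue $\sigma$-algebra. $F$ is a probability distribution on $A$ with a density and $G$ a probability distribution on $\Theta$ with a density; $G_w$ is the marginal distribution of $w$ under $G$. Reserve prices: measurable $r:A\to(0,\infty)$. Let $K$ be the distribution of $\alpha/r(\alpha)$ when $\alpha\sim F$, and for $w\in\Theta_w$ let $K_w$ be the distribution of $w^T\gamma$ when $\gamma\sim K$ (i.e. the distribution of $w^T\alpha/r(\alpha)$ under $\alpha\sim F$). *)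

theory Defs
  imports "HOL-Probability.Probability"
begin

definition Theta :: "real \<Rightarrow> real \<Rightarrow> ((real^'n) \<times> real) set" where
  "Theta U Bmin = {(w, B). (\<forall>i. 0 < w $ i \<and> w $ i < U) \<and> Bmin < B \<and> B < U}"

definition Kdist :: "(real^'n) measure \<Rightarrow> (real^'n \<Rightarrow> real) \<Rightarrow> (real^'n) measure" where
  "Kdist F r = distr F borel (\<lambda>\<alpha>. (1 / r \<alpha>) *\<^sub>R \<alpha>)"

definition Kw :: "(real^'n) measure \<Rightarrow> (real^'n \<Rightarrow> real) \<Rightarrow> real^'n \<Rightarrow> real measure" where
  "Kw F r w = distr (Kdist F r) borel (\<lambda>\<gamma>. w \<bullet> \<gamma>)"

end

theory Submission
  imports Defs
begin

(* Since r > 0 on A and d \<ge> 2, the law K of \<alpha> / r \<alpha> has no atoms: \<alpha> / r \<alpha> = \<gamma> forces \<alpha>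
   onto the line through \<gamma>, a Lebesgue null set. For two independent K-samples \<gamma>, \<gamma>' the
   tie w \<bullet> \<gamma> = w \<bullet> \<gamma>' then has probability 0 for Lebesgue-a.e. w, by Tonelli: for \<gamma> \<noteq> \<gamma>'
   the ties lie on a hyperplane in w, and \<gamma> = \<gamma>' is a null event. An atom c of K_w would
   give the tie probability K_w{c}^2 > 0. Finally G has a Lebesgue density, so the null set
   of bad w, times the budget axis, is G-null. *)

lemma continuous_cdf_if_no_atoms:
  fixes M :: "real measure"
  assumes "prob_space M" "sets M = sets borel" "\<And>c. measure M {c} = 0"
  shows "continuous_on UNIV (cdf M)"
proof -
  interpret real_distribution M
    using assms by (auto simp: real_distribution_def real_distribution_axioms_def)
  show ?thesis
    using isCont_cdf assms(3) by (intro continuous_at_imp_continuous_on) auto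
qed

lemma hyperplane_in_null_sets_lborel:
  fixes v :: "'a::euclidean_space"
  assumes "v \<noteq> 0"
  shows "{w. v \<bullet> w = 0} \<in> null_sets lborel"
proof -
  have "{w. v \<bullet> w = 0} \<in> null_sets lebesgue"
    using negligible_hyperplane[of v 0] assms by (simp add: negligible_iff_null_sets)
  moreover have "{w. v \<bullet> w = 0} \<in> sets lborel"
    using closed_hyperplane by (auto intro: borel_closed)
  ultimately show ?thesis
    by (simp add: null_sets_completion_iff)
qed

lemma pair_diagonal_in_null_sets:
  fixes K :: "'a::euclidean_space measure"
  assumes "prob_space K" "sets K = sets borel" "\<And>x. emeasure K {x} = 0"
  shows "{p. fst p = snd p} \<in> null_sets (K \<Otimes>\<^sub>M K)"
proof -
  interpret prob_space K by fact
  have "{p \<in> space (borel \<Otimes>\<^sub>M borel). fst p = (snd p :: 'a)} \<in> sets (borel \<Otimes>\<^sub>M borel)"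
    by measurable
  then have diag: "{p. fst p = snd p} \<in> sets (K \<Otimes>\<^sub>M K)"
    using assms(2) by (simp add: space_pair_measure sets_pair_measure_cong[OF assms(2) assms(2)])
  have "emeasure (K \<Otimes>\<^sub>M K) {p. fst p = snd p} = (\<integral>\<^sup>+x. emeasure K (Pair x -` {p. fst p = snd p}) \<partial>K)"
    using diag by (rule emeasure_pair_measure_alt)
  also have "\<dots> = 0"
    using assms(3) by (simp add: vimage_def)
  finally show ?thesis
    using diag by (rule null_setsI)
qed

lemma AE_lborel_inner_ties_null:
  fixes K :: "'a::euclidean_space measure"
  assumes P: "prob_space K" and S: "sets K = sets borel" and atomless: "\<And>x. emeasure K {x} = 0"
  shows "AE w in lborel. emeasure (K \<Otimes>\<^sub>M K) {p. w \<bullet> fst p = w \<bullet> snd p} = 0"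
proof -
  define KK where "KK = K \<Otimes>\<^sub>M K"
  interpret KK: prob_space KK
    unfolding KK_def by (intro prob_space_pair P)
  interpret pair_sigma_finite lborel KK
    by (intro pair_sigma_finite.intro lborel.sigma_finite_measure_axioms KK.sigma_finite_measure_axioms)
  define E where "E = {x :: 'a \<times> 'a \<times> 'a. fst x \<bullet> fst (snd x) = fst x \<bullet> snd (snd x)}"
  have sets_KK: "sets KK = sets (borel \<Otimes>\<^sub>M borel)"
    unfolding KK_def by (intro sets_pair_measure_cong S)
  have "{x \<in> space (borel \<Otimes>\<^sub>M (borel \<Otimes>\<^sub>M borel)). fst x \<bullet> fst (snd x) = fst x \<bullet> (snd (snd x) :: 'a)}
      \<in> sets (borel \<Otimes>\<^sub>M (borel \<Otimes>\<^sub>M borel))"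
    by measurable
  then have E: "E \<in> sets (lborel \<Otimes>\<^sub>M KK)"
    by (simp add: E_def space_pair_measure sets_pair_measure_cong[OF _ sets_KK])
  have diag_null: "{p. fst p = snd p} \<in> null_sets KK"
    unfolding KK_def using P S atomless by (rule pair_diagonal_in_null_sets)
  have slices: "emeasure lborel ((\<lambda>w. (w, p)) -` E) \<le> \<infinity> * indicator {p. fst p = snd p} p" for p
  proof (cases "fst p = snd p")
    case False
    have "(\<lambda>w. (w, p)) -` E = {w. (fst p - snd p) \<bullet> w = 0}"
      by (auto simp: E_def inner_diff_left inner_diff_right inner_commute)
    then show ?thesis
      using hyperplane_in_null_sets_lborel[of "fst p - snd p"] False by (simp add: null_sets_def)
  qed simp
  have "emeasure (lborel \<Otimes>\<^sub>M KK) E = (\<integral>\<^sup>+p. emeasure lborel ((\<lambda>w. (w, p)) -` E) \<partial>KK)"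
    using E by (rule emeasure_pair_measure_alt2)
  also have "\<dots> \<le> (\<integral>\<^sup>+p. \<infinity> * indicator {p. fst p = snd p} p \<partial>KK)"
    using slices by (intro nn_integral_mono)
  also have "\<dots> = 0"
    using diag_null by (simp add: nn_integral_cmult_indicator null_setsD1 null_setsD2)
  finally have "(\<integral>\<^sup>+w. emeasure KK (Pair w -` E) \<partial>lborel) = 0"
    using KK.emeasure_pair_measure_alt[OF E] by simp
  then have "AE w in lborel. emeasure KK (Pair w -` E) = 0"
    using KK.measurable_emeasure_Pair[OF E] by (simp add: nn_integral_0_iff_AE)
  then show ?thesis
    by (simp add: KK_def E_def vimage_def)
qed

lemma measure_distr_inner_singleton_eq_0:
  fixes K :: "'a::euclidean_space measure"
  assumes P: "prob_space K" and S: "sets K = sets borel"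
    and ties: "emeasure (K \<Otimes>\<^sub>M K) {p. w \<bullet> fst p = w \<bullet> snd p} = 0"
  shows "measure (distr K borel (\<lambda>x. w \<bullet> x)) {c} = 0"
proof -
  interpret prob_space K by fact
  have meas: "(\<lambda>x. w \<bullet> x) \<in> K \<rightarrow>\<^sub>M borel"
    by (simp add: measurable_cong_sets[OF S refl])
  define T where "T = (\<lambda>x. w \<bullet> x) -` {c} \<inter> space K"
  have T: "T \<in> sets K"
    unfolding T_def using meas by (intro measurable_sets) auto
  have "{p \<in> space (K \<Otimes>\<^sub>M K). w \<bullet> fst p = w \<bullet> snd p} \<in> sets (K \<Otimes>\<^sub>M K)"
    using meas by measurable
  moreover have "space (K \<Otimes>\<^sub>M K) = UNIV"
    using S by (simp add: space_pair_measure sets_eq_imp_space_eq)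
  ultimately have "emeasure (K \<Otimes>\<^sub>M K) (T \<times> T) \<le> emeasure (K \<Otimes>\<^sub>M K) {p. w \<bullet> fst p = w \<bullet> snd p}"
    by (intro emeasure_mono) (auto simp: T_def)
  then have "emeasure K T * emeasure K T = 0"
    using ties T by (simp add: emeasure_pair_measure_Times)
  then show ?thesis
    using meas by (simp add: emeasure_distr T_def measure_def)
qed

lemma AE_lborel_continuous_cdf_distr_inner:
  fixes K :: "'a::euclidean_space measure"
  assumes "prob_space K" "sets K = sets borel" "\<And>x. emeasure K {x} = 0"
  shows "AE w in lborel. continuous_on UNIV (cdf (distr K borel (\<lambda>x. w \<bullet> x)))"
  using AE_lborel_inner_ties_null[OF assms]
proof eventually_elim
  case (elim w)
  have "prob_space (distr K borel (\<lambda>x. w \<bullet> x))"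
    using assms(1,2) by (intro prob_space.prob_space_distr) (auto simp: measurable_cong_sets[OF assms(2) refl])
  then show ?case
    using measure_distr_inner_singleton_eq_0[OF assms(1,2) elim]
    by (intro continuous_cdf_if_no_atoms) auto
qed

lemma span_singleton_in_null_sets_lebesgue:
  fixes x :: "'a::euclidean_space"
  assumes "DIM('a) \<ge> 2"
  shows "span {x} \<in> null_sets lebesgue"
proof -
  have "dim (span {x}) \<le> 1"
    using dim_le_card[of "{x}" "{x}"] by (auto simp: dim_span span_base)
  then show ?thesis
    using assms by (simp add: negligible_lowdim negligible_iff_null_sets[symmetric])
qed

lemma
  fixes F :: "(real^'n) measure" and f :: "real^'n \<Rightarrow> ennreal" and A :: "(real^'n) set"
  assumes d2: "CARD('n) \<ge> 2"
    and A_meas: "A \<in> sets lebesgue"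
    and f_meas: "f \<in> borel_measurable lebesgue"
    and F_def: "F = density lebesgue f"
    and F_prob: "prob_space F"
    and F_on_A: "emeasure F A = 1"
    and r_meas: "r \<in> borel_measurable lebesgue"
    and r_pos: "\<forall>\<alpha>\<in>A. 0 < r \<alpha>"
  shows prob_space_Kdist: "prob_space (Kdist F r)"
    and sets_Kdist: "sets (Kdist F r) = sets borel"
    and emeasure_Kdist_singleton: "emeasure (Kdist F r) {\<gamma>} = 0"
proof -
  interpret prob_space F by fact
  define \<phi> where "\<phi> = (\<lambda>\<alpha>::real^'n. (1 / r \<alpha>) *\<^sub>R \<alpha>)"
  have sets_F: "sets F = sets lebesgue"
    using F_def by simp
  have \<phi>_meas: "\<phi> \<in> F \<rightarrow>\<^sub>M borel"
    unfolding measurable_cong_sets[OF sets_F refl] \<phi>_def using r_meas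
    by (intro borel_measurable_scaleR borel_measurable_divide) (auto intro: measurable_completion)
  show "prob_space (Kdist F r)"
    unfolding Kdist_def \<phi>_def[symmetric] using \<phi>_meas by (rule prob_space_distr)
  show "sets (Kdist F r) = sets borel"
    unfolding Kdist_def by simp
  have line: "span {\<gamma>} \<in> null_sets F"
    using span_singleton_in_null_sets_lebesgue[of \<gamma>] d2 f_meas
    unfolding F_def by (subst null_sets_density_iff) (auto intro: AE_I')
  have "space F - A \<in> null_sets F"
    using A_meas sets_F F_on_A prob_compl[of A] sets.compl_sets[of A F]
    by (simp add: emeasure_eq_measure null_sets_def)
  then have not_A: "UNIV - A \<in> null_sets F"
    using F_def by simp
  have "\<phi> -` {\<gamma>} \<inter> space F \<subseteq> (UNIV - A) \<union> span {\<gamma>}"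
  proof
    fix \<alpha> assume "\<alpha> \<in> \<phi> -` {\<gamma>} \<inter> space F"
    then have \<gamma>: "(1 / r \<alpha>) *\<^sub>R \<alpha> = \<gamma>"
      by (simp add: \<phi>_def)
    show "\<alpha> \<in> (UNIV - A) \<union> span {\<gamma>}"
    proof (cases "\<alpha> \<in> A")
      case True
      then have "\<alpha> = r \<alpha> *\<^sub>R \<gamma>"
        using r_pos \<gamma> by auto
      then show ?thesis
        by (metis UnI2 span_base span_scale singletonI)
    qed simp
  qed
  moreover have "\<phi> -` {\<gamma>} \<inter> space F \<in> sets F"
    using \<phi>_meas by (rule measurable_sets) simp
  ultimately have "\<phi> -` {\<gamma>} \<inter> space F \<in> null_sets F"
    using null_sets_subset[OF null_sets.Un[OF not_A line]] by blast
  then show "emeasure (Kdist F r) {\<gamma>} = 0"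
    unfolding Kdist_def \<phi>_def[symmetric] using \<phi>_meas by (simp add: emeasure_distr null_setsD1)
qed

lemma times_UNIV_in_null_sets_lborel:
  fixes N :: "'a::euclidean_space set"
  assumes "N \<in> null_sets lborel"
  shows "N \<times> (UNIV :: 'b::euclidean_space set) \<in> null_sets lborel"
proof -
  have "N \<times> (UNIV :: 'b set) \<in> null_sets (lborel \<Otimes>\<^sub>M lborel)"
    using assms by (intro lborel.times_in_null_sets1) auto
  then show ?thesis
    by (simp add: lborel_prod)
qed

lemma measurable_fst_lebesgue:
  "fst \<in> (lebesgue :: ('a::euclidean_space \<times> 'b::euclidean_space) measure) \<rightarrow>\<^sub>M lebesgue"
proof (rule measurableI)
  fix S :: "'a set" assume "S \<in> sets lebesgue"
  then obtain S1 T T' where S: "S = S1 \<union> T" "T \<subseteq> T'" "T' \<in> null_sets lborel" "S1 \<in> sets lborel"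
    by (rule sets_completionE)
  have "S1 \<times> (UNIV :: 'b set) \<in> sets (lborel \<Otimes>\<^sub>M lborel)"
    using S(4) by (intro pair_measureI) auto
  then have "S1 \<times> (UNIV :: 'b set) \<in> sets lborel"
    by (metis lborel_prod)
  moreover have "T \<times> (UNIV :: 'b set) \<subseteq> T' \<times> UNIV"
    using S(2) by auto
  moreover have "fst -` S \<inter> space lebesgue = S1 \<times> UNIV \<union> T \<times> (UNIV :: 'b set)"
    using S(1) by auto
  ultimately show "fst -` S \<inter> space lebesgue \<in> sets (lebesgue :: ('a \<times> 'b) measure)"
    using times_UNIV_in_null_sets_lborel[OF S(3)] by (metis sets_completionI)
qed auto

lemma AE_density_lebesgue_fst:
  fixes g :: "'a::euclidean_space \<times> 'b::euclidean_space \<Rightarrow> ennreal"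
  assumes "AE w in lborel. P w" "g \<in> borel_measurable lebesgue"
  shows "AE p in density lebesgue g. P (fst p)"
proof -
  obtain N where N: "{w \<in> space lborel. \<not> P w} \<subseteq> N" "emeasure lborel N = 0" "N \<in> sets lborel"
    using assms(1) by (rule AE_E)
  have "N \<times> (UNIV :: 'b set) \<in> null_sets lborel"
    using N(2,3) by (intro times_UNIV_in_null_sets_lborel) (simp add: null_sets_def)
  moreover have "{p :: 'a \<times> 'b \<in> space lborel. \<not> P (fst p)} \<subseteq> N \<times> UNIV"
    using N(1) by auto
  ultimately have "AE p :: 'a \<times> 'b in lborel. P (fst p)"
    by (rule AE_I'[where P="\<lambda>p. P (fst p)"])
  then show ?thesis
    using assms(2) by (auto simp: AE_density dest: AE_completion)
qed

lemma pred_lebesgue_if_AE_lborel: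
  assumes "AE x in lborel. P x"
  shows "Measurable.pred lebesgue P"
proof -
  have "Measurable.pred lebesgue (\<lambda>x. \<not> P x)"
    using sets_completion_AE[where M=lborel and P="\<lambda>x. \<not> P x"] assms by simp
  then have "Measurable.pred lebesgue (\<lambda>x. \<not> \<not> P x)"
    by measurable
  then show ?thesis
    by simp
qed

theorem mainTheorem12:
  fixes U Bmin :: real
    and A :: "(real^'n) set"
    and F :: "(real^'n) measure" and f :: "real^'n \<Rightarrow> ennreal"
    and G :: "((real^'n) \<times> real) measure" and g :: "(real^'n) \<times> real \<Rightarrow> ennreal"
    and r :: "real^'n \<Rightarrow> real"
  assumes d2: "CARD('n) \<ge> 2"
    and U: "U > 0" and Bmin: "Bmin > 0"
    and A_pos: "A \<subseteq> {x. \<forall>i. 0 < x $ i}"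
    and A_meas: "A \<in> sets lebesgue"
    and f_meas: "f \<in> borel_measurable lebesgue"
    and F_def: "F = density lebesgue f"
    and F_prob: "prob_space F"
    and F_on_A: "emeasure F A = 1"
    and g_meas: "g \<in> borel_measurable lebesgue"
    and G_def: "G = density lebesgue g"
    and G_prob: "prob_space G"
    and G_on_Theta: "emeasure G (Theta U Bmin) = 1"
    and r_meas: "r \<in> borel_measurable lebesgue"
    and r_pos: "\<forall>\<alpha>\<in>A. 0 < r \<alpha>"
  shows "(AE w in distr G lebesgue fst. continuous_on UNIV (cdf (Kw F r w)))
         \<and> emeasure G {p \<in> Theta U Bmin. continuous_on UNIV (cdf (Kw F r (fst p)))} = 1"
proof -
  let ?good = "\<lambda>w. continuous_on UNIV (cdf (Kw F r w))"
  note K = prob_space_Kdist sets_Kdist emeasure_Kdist_singleton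
  have "AE w in lborel. ?good w"
    using AE_lborel_continuous_cdf_distr_inner[OF K[OF d2 A_meas f_meas F_def F_prob F_on_A r_meas r_pos]]
    by (simp add: Kw_def)
  then have good_meas: "Measurable.pred lebesgue ?good" and ae_G: "AE p in G. ?good (fst p)"
    using pred_lebesgue_if_AE_lborel AE_density_lebesgue_fst g_meas G_def by auto
  have fst_meas: "fst \<in> G \<rightarrow>\<^sub>M lebesgue"
    using measurable_fst_lebesgue G_def by simp
  then have good_fst_meas: "Measurable.pred G (\<lambda>p. ?good (fst p))"
    using good_meas by (rule measurable_compose)
  have "AE w in distr G lebesgue fst. ?good w"
    using ae_G fst_meas good_meas by (subst AE_distr_iff) (auto simp: pred_def)
  moreover have "emeasure G {p \<in> Theta U Bmin. ?good (fst p)} = emeasure G (Theta U Bmin)"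
  proof (rule emeasure_eq_AE)
    show Theta: "Theta U Bmin \<in> sets G"
      using G_on_Theta emeasure_notin_sets by fastforce
    have "{p \<in> space G. p \<in> Theta U Bmin \<and> ?good (fst p)} \<in> sets G"
      using Theta good_fst_meas by measurable
    then show "{p \<in> Theta U Bmin. ?good (fst p)} \<in> sets G"
      using G_def by simp
  qed (use ae_G in auto)
  ultimately show ?thesis
    using G_on_Theta by simp
qed

end
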